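(* For all $n\ge3$, $f_\infty(W_n)\le4$, where $W_n$ is the wheel obtained from a cycle of length $n$ by adding a vertex adjacent to all vertices of the cycle.
   Context: A distance function on a graph $G$ is $d:E(G)\to\mathbb{R}_{\ge0}$ with $d(vw)\le\sum_i d(v_{i-1}v_i)$ for every edge $vw$ and every $v$–$w$ path. $f_\infty(G)$ is the least $k$ such that for every distance function $d$ on $G$ there is $\phi:V(G)\to\mathbb{R}^k$ with $\|\phi(v)-\phi(w)\|_\infty=d(vw)$ for all edges $vw$. *)

theory Defs
  imports Complex_Main
begin

definition is_path :: "'a set \<Rightarrow> 'a set set \<Rightarrow> 'a \<Rightarrow> 'a \<Rightarrow> 'a list \<Rightarrow> bool" where
  "is_path V E v w ps \<longleftrightarrow> ps \<noteq> [] \<and> hd ps = v \<and> last ps = w \<and> distinct ps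
     \<and> set ps \<subseteq> V \<and> (\<forall>(a,b)\<in>set (zip ps (tl ps)). {a,b} \<in> E)"

definition path_length :: "('a set \<Rightarrow> real) \<Rightarrow> 'a list \<Rightarrow> real" where
  "path_length d ps = sum_list (map (\<lambda>(a,b). d {a,b}) (zip ps (tl ps)))"

definition distance_function :: "'a set \<Rightarrow> 'a set set \<Rightarrow> ('a set \<Rightarrow> real) \<Rightarrow> bool" where
  "distance_function V E d \<longleftrightarrow> (\<forall>e\<in>E. d e \<ge> 0) \<and>
     (\<forall>v w ps. {v,w} \<in> E \<longrightarrow> is_path V E v w ps \<longrightarrow> d {v,w} \<le> path_length d ps)"

text \<open>Sup-norm distance in R^k, points of R^k represented as nat => real (coordinates < k).\<close>
definition linf_dist :: "nat \<Rightarrow> (nat \<Rightarrow> real) \<Rightarrow> (nat \<Rightarrow> real) \<Rightarrow> real" where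
  "linf_dist k x y = Max (insert 0 {\<bar>x i - y i\<bar> | i. i < k})"

definition linf_realizable :: "'a set \<Rightarrow> 'a set set \<Rightarrow> nat \<Rightarrow> bool" where
  "linf_realizable V E k \<longleftrightarrow> (\<forall>d. distance_function V E d \<longrightarrow>
     (\<exists>\<phi> :: 'a \<Rightarrow> nat \<Rightarrow> real. \<forall>v w. {v,w} \<in> E \<longrightarrow> linf_dist k (\<phi> v) (\<phi> w) = d {v,w}))"

definition f_infty :: "'a set \<Rightarrow> 'a set set \<Rightarrow> nat" where
  "f_infty V E = (LEAST k. linf_realizable V E k)"

text \<open>Wheel W_n: cycle on 0..n-1, hub n.\<close>
definition wheel_V :: "nat \<Rightarrow> nat set" where
  "wheel_V n = {0..n}"

definition wheel_E :: "nat \<Rightarrow> nat set set" where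
  "wheel_E n = {{i, (i + 1) mod n} | i. i < n} \<union> {{i, n} | i. i < n}"

end

theory Submission
  imports Defs
begin

text \<open>Put the hub at the origin and give each rim vertex i its spoke length r i as the
  last coordinate. This realizes every spoke, and since |r i - r (i+1)| <= c i it never
  overshoots a rim edge. It remains to place the rim in three coordinates, inside the
  box of radius r i around the origin, with consecutive points at sup-distance exactly c i.
  Cut the rim at an edge m -- 0 minimizing r i + r (i+1) - c i. Along the path 0, ..., m
  two coordinates suffice: a greedy walk keeps one of them at full radius and moves one
  of them by exactly c k in each step. Running it inside shrunken radii R k <= r k with
  R 0 + R m <= c m keeps the closing edge short in both coordinates, and minimality of the
  cut is what keeps c k <= R k + R (k+1). The third coordinate, r 0 minus the distance
  from 0 truncated at c m, is tight on the closing edge.\<close>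

section \<open>Distance functions on the wheel\<close>

lemma inj_on_add_mod: "inj_on (\<lambda>t. (a + t) mod n) {..<(n::nat)}"
proof (rule linorder_inj_onI')
  fix x y assume "x \<in> {..<n}" "y \<in> {..<n}" "x < y"
  then have "0 < y - x" "y - x < n"
    by auto
  then have "\<not> n dvd y - x"
    using dvd_imp_le by fastforce
  then show "(a + x) mod n \<noteq> (a + y) mod n"
    using \<open>x < y\<close> mod_eq_dvd_iff_nat[of "a + x" "a + y" n] by simp
qed

lemma sum_rotate: "(\<Sum>t<n. f ((a + t) mod n)) = (\<Sum>t<(n::nat). f t)"
proof -
  have "(\<lambda>t. (a + t) mod n) ` {..<n} = {..<n}"
    by (rule endo_inj_surj) (auto simp: inj_on_add_mod)
  then have "bij_betw (\<lambda>t. (a + t) mod n) {..<n} {..<n}"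
    by (simp add: bij_betw_def inj_on_add_mod)
  then show ?thesis
    by (rule sum.reindex_bij_betw)
qed

lemma Suc_mod_add: "(a + Suc u mod n) mod n = Suc ((a + u) mod n) mod (n::nat)"
  by (simp add: mod_Suc_eq mod_add_right_eq)

lemma Suc_add_mod_Suc:
  assumes "i < Suc m"
  shows "(Suc i + m) mod Suc m = i"
proof -
  have "Suc i + m = i + Suc m"
    by simp
  then show ?thesis
    using assms by (simp only: mod_add_self2 mod_less)
qed

lemma zip_tl_map_upt:
  "zip (map g [0..<Suc m]) (tl (map g [0..<Suc m])) = map (\<lambda>t. (g t, g (Suc t))) [0..<m]"
  by (rule nth_equalityI) (auto simp del: upt_Suc simp: nth_tl)

lemma is_path_map_upt:
  assumes "inj_on g {..m}" "g 0 = v" "g m = w" "g ` {..m} \<subseteq> V"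
    and "\<And>t. t < m \<Longrightarrow> {g t, g (Suc t)} \<in> E"
  shows "is_path V E v w (map g [0..<Suc m])"
proof -
  have "set [0..<Suc m] = {..m}"
    by auto
  then show ?thesis
    using assms unfolding is_path_def zip_tl_map_upt
    by (auto simp del: upt_Suc simp: distinct_map hd_map last_map)
qed

lemma path_length_map_upt:
  "path_length d (map g [0..<Suc m]) = (\<Sum>t<m. d {g t, g (Suc t)})"
  unfolding path_length_def zip_tl_map_upt
  by (simp add: sum_list_sum_nth atLeast0LessThan)

lemma distance_function_le_path_length:
  "distance_function V E d \<Longrightarrow> {v, w} \<in> E \<Longrightarrow> is_path V E v w ps \<Longrightarrow> d {v, w} \<le> path_length d ps"
  by (simp add: distance_function_def)

lemma distance_function_triangle:
  assumes "distance_function V E d" "{u, w} \<in> E" "{u, v} \<in> E" "{v, w} \<in> E"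
    and "u \<in> V" "v \<in> V" "w \<in> V" "distinct [u, v, w]"
  shows "d {u, w} \<le> d {u, v} + d {v, w}"
proof -
  have "is_path V E u w [u, v, w]"
    using assms by (simp add: is_path_def)
  then have "d {u, w} \<le> path_length d [u, v, w]"
    by (rule distance_function_le_path_length[OF assms(1,2)])
  then show ?thesis
    by (simp add: path_length_def)
qed

lemma wheel_rim_edge: "i < n \<Longrightarrow> {i, Suc i mod n} \<in> wheel_E n"
  unfolding wheel_E_def by (rule UnI1) auto

lemma wheel_spoke: "i < n \<Longrightarrow> {i, n} \<in> wheel_E n"
  unfolding wheel_E_def by (rule UnI2) auto

lemma wheel_rim_path:
  assumes "i < n"
  shows "is_path (wheel_V n) (wheel_E n) (Suc i mod n) i (map (\<lambda>t. (Suc i + t) mod n) [0..<n])"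
proof -
  obtain m where n: "n = Suc m"
    using assms by (cases n) auto
  have "(Suc i + m) mod n = i"
    using assms Suc_add_mod_Suc by (simp only: n)
  moreover have "{(Suc i + t) mod n, (Suc i + Suc t) mod n} \<in> wheel_E n" for t
    using wheel_rim_edge[of "(Suc i + t) mod n" n] n by (simp add: mod_Suc_eq)
  moreover have "inj_on (\<lambda>t. (Suc i + t) mod n) {..m}"
    using inj_on_add_mod[of "Suc i" n] by (simp only: n lessThan_Suc_atMost)
  ultimately show ?thesis
    unfolding n by (intro is_path_map_upt) (auto simp: wheel_V_def)
qed

lemma wheel_rim_edge_le_rest:
  assumes "distance_function (wheel_V n) (wheel_E n) d" "i < n"
  shows "2 * d {i, Suc i mod n} \<le> (\<Sum>j<n. d {j, Suc j mod n})"
proof -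
  obtain m where n: "n = Suc m"
    using assms by (cases n) auto
  define g where "g t = (Suc i + t) mod n" for t
  have g_Suc: "g (Suc t) = Suc (g t) mod n" for t
    by (simp add: g_def mod_Suc_eq)
  have "d {Suc i mod n, i} \<le> path_length d (map g [0..<n])"
    using wheel_rim_edge[OF assms(2)] unfolding g_def
    by (intro distance_function_le_path_length[OF assms(1)] wheel_rim_path[OF assms(2)])
      (simp add: insert_commute)
  also have "\<dots> = (\<Sum>t<m. d {g t, Suc (g t) mod n})"
    by (simp only: n path_length_map_upt g_Suc[unfolded n])
  also have "\<dots> = (\<Sum>t<n. d {g t, Suc (g t) mod n}) - d {i, Suc i mod n}"
    using Suc_add_mod_Suc[of i m] assms(2) by (simp add: n g_def)
  also have "\<dots> = (\<Sum>j<n. d {j, Suc j mod n}) - d {i, Suc i mod n}"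
    unfolding g_def using sum_rotate[of "\<lambda>j. d {j, Suc j mod n}" "Suc i" n] by simp
  finally show ?thesis
    by (simp add: insert_commute)
qed

(* Spoke lengths r and rim lengths c; these inequalities are all the construction uses. *)
definition wheel_conditions :: "nat \<Rightarrow> (nat \<Rightarrow> real) \<Rightarrow> (nat \<Rightarrow> real) \<Rightarrow> bool" where
  "wheel_conditions n r c \<longleftrightarrow> (\<forall>i<n. 0 \<le> r i \<and> \<bar>r i - r (Suc i mod n)\<bar> \<le> c i
     \<and> c i \<le> r i + r (Suc i mod n) \<and> 2 * c i \<le> (\<Sum>j<n. c j))"

lemma wheel_conditions_of_distance_function:
  assumes "2 \<le> n" and d: "distance_function (wheel_V n) (wheel_E n) d"
  shows "wheel_conditions n (\<lambda>i. d {i, n}) (\<lambda>i. d {i, Suc i mod n})"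
  unfolding wheel_conditions_def
proof (intro allI impI conjI)
  fix i assume i: "i < n"
  define j where "j = Suc i mod n"
  have j: "j < n" "j \<noteq> i"
    using i \<open>2 \<le> n\<close> by (auto simp: j_def mod_Suc)
  have E: "{i, j} \<in> wheel_E n" "{i, n} \<in> wheel_E n" "{j, n} \<in> wheel_E n"
    using i j wheel_rim_edge[OF i] wheel_spoke by (auto simp: j_def)
  have V: "i \<in> wheel_V n" "j \<in> wheel_V n" "n \<in> wheel_V n"
    using i j by (auto simp: wheel_V_def)
  note triangle = distance_function_triangle[OF d]
  show "0 \<le> d {i, n}"
    using d E by (simp add: distance_function_def)
  show "d {i, j} \<le> d {i, n} + d {j, n}"
    using triangle[of i j n] E V i j by (simp add: insert_commute)
  have "d {i, n} \<le> d {i, j} + d {j, n}" "d {j, n} \<le> d {i, j} + d {i, n}"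
    using triangle[of i n j] triangle[of j n i] E V i j by (auto simp: insert_commute)
  then show "\<bar>d {i, n} - d {j, n}\<bar> \<le> d {i, j}"
    by linarith
  show "2 * d {i, j} \<le> (\<Sum>j<n. d {j, Suc j mod n})"
    using wheel_rim_edge_le_rest[OF d i] by (simp add: j_def)
qed

lemma wheel_conditions_rotate:
  assumes "wheel_conditions n r c"
  shows "wheel_conditions n (\<lambda>u. r ((a + u) mod n)) (\<lambda>u. c ((a + u) mod n))"
  unfolding wheel_conditions_def
proof (intro allI impI)
  fix i assume "i < n"
  then have "(a + i) mod n < n"
    by simp
  with assms have "0 \<le> r ((a + i) mod n)
      \<and> \<bar>r ((a + i) mod n) - r (Suc ((a + i) mod n) mod n)\<bar> \<le> c ((a + i) mod n)
      \<and> c ((a + i) mod n) \<le> r ((a + i) mod n) + r (Suc ((a + i) mod n) mod n)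
      \<and> 2 * c ((a + i) mod n) \<le> (\<Sum>j<n. c j)"
    unfolding wheel_conditions_def by blast
  then show "0 \<le> r ((a + i) mod n)
      \<and> \<bar>r ((a + i) mod n) - r ((a + Suc i mod n) mod n)\<bar> \<le> c ((a + i) mod n)
      \<and> c ((a + i) mod n) \<le> r ((a + i) mod n) + r ((a + Suc i mod n) mod n)
      \<and> 2 * c ((a + i) mod n) \<le> (\<Sum>j<n. c ((a + j) mod n))"
    by (simp only: Suc_mod_add sum_rotate[of c])
qed

section \<open>Coordinates along a path\<close>

lemma two_coordinates_step_from_full:
  fixes a b R R' c :: real
  assumes a: "\<bar>a\<bar> = R" and b: "\<bar>b\<bar> \<le> R" and "0 \<le> R'" "\<bar>R - R'\<bar> \<le> c" "c \<le> R + R'"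
  shows "\<exists>a' b'. max \<bar>a'\<bar> \<bar>b'\<bar> = R' \<and> max \<bar>a - a'\<bar> \<bar>b - b'\<bar> = c"
proof -
  have c: "0 \<le> c" "R - R' \<le> c" "R' - R \<le> c"
    using assms(4) by (auto simp: abs_le_iff)
  show ?thesis
  proof (cases "c \<le> R'")
    case True
    define a' where "a' = (if a < 0 then - R' else R')"
    define b' where "b' = (if b < 0 then b + c else b - c)"
    have "\<bar>a'\<bar> = R'" "\<bar>a - a'\<bar> \<le> c"
      using a assms(3) c by (auto simp: a'_def abs_if)
    moreover have "\<bar>b'\<bar> \<le> R'" "\<bar>b - b'\<bar> = c"
      using b True c by (auto simp: b'_def abs_le_iff)
    ultimately show ?thesis
      by (intro exI[of _ a'] exI[of _ b']) (simp add: max_def)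
  next
    case False
    define a' where "a' = (if a < 0 then a + c else a - c)"
    define b' where "b' = (if b < 0 then - R' else R')"
    have "\<bar>a'\<bar> \<le> R'" "\<bar>a - a'\<bar> = c"
      using a c assms(5) by (auto simp: a'_def abs_if)
    moreover have "\<bar>b'\<bar> = R'" "\<bar>b - b'\<bar> \<le> c"
      using b False assms(3) c by (auto simp: b'_def abs_if)
    ultimately show ?thesis
      by (intro exI[of _ a'] exI[of _ b']) (simp add: max_def)
  qed
qed

lemma two_coordinates_step:
  fixes a b R R' c :: real
  assumes "max \<bar>a\<bar> \<bar>b\<bar> = R" "0 \<le> R'" "\<bar>R - R'\<bar> \<le> c" "c \<le> R + R'"
  shows "\<exists>a' b'. max \<bar>a'\<bar> \<bar>b'\<bar> = R' \<and> max \<bar>a - a'\<bar> \<bar>b - b'\<bar> = c"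
proof (cases "\<bar>b\<bar> \<le> \<bar>a\<bar>")
  case True
  then show ?thesis
    using two_coordinates_step_from_full[of a R b R' c] assms by (simp add: max_def)
next
  case False
  then obtain b' a' where "max \<bar>b'\<bar> \<bar>a'\<bar> = R'" "max \<bar>b - b'\<bar> \<bar>a - a'\<bar> = c"
    using two_coordinates_step_from_full[of b R a R' c] assms by (auto simp: max_def)
  then show ?thesis
    by (auto simp: max.commute)
qed

lemma path_two_coordinates:
  fixes R c :: "nat \<Rightarrow> real"
  assumes "\<And>k. k \<le> m \<Longrightarrow> 0 \<le> R k"
    and "\<And>k. k < m \<Longrightarrow> \<bar>R k - R (Suc k)\<bar> \<le> c k \<and> c k \<le> R k + R (Suc k)"
  shows "\<exists>A B. (\<forall>k\<le>m. max \<bar>A k\<bar> \<bar>B k\<bar> = R k)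
    \<and> (\<forall>k<m. max \<bar>A k - A (Suc k)\<bar> \<bar>B k - B (Suc k)\<bar> = c k)"
  using assms
proof (induction m)
  case 0
  show ?case
    by (rule exI[of _ "\<lambda>_. R 0"], rule exI[of _ "\<lambda>_. 0"]) (use 0 in auto)
next
  case (Suc m)
  obtain A B where AB: "\<forall>k\<le>m. max \<bar>A k\<bar> \<bar>B k\<bar> = R k"
      "\<forall>k<m. max \<bar>A k - A (Suc k)\<bar> \<bar>B k - B (Suc k)\<bar> = c k"
    using Suc.IH Suc.prems by force
  obtain a b where ab: "max \<bar>a\<bar> \<bar>b\<bar> = R (Suc m)" "max \<bar>A m - a\<bar> \<bar>B m - b\<bar> = c m"
    using two_coordinates_step[of "A m" "B m" "R m" "R (Suc m)" "c m"] AB Suc.prems by auto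
  define A' where "A' = A(Suc m := a)"
  define B' where "B' = B(Suc m := b)"
  have "\<forall>k\<le>Suc m. max \<bar>A' k\<bar> \<bar>B' k\<bar> = R k"
    using AB(1) ab(1) by (auto simp: A'_def B'_def le_Suc_eq)
  moreover have "\<forall>k<Suc m. max \<bar>A' k - A' (Suc k)\<bar> \<bar>B' k - B' (Suc k)\<bar> = c k"
    using AB(2) ab(2) by (auto simp: A'_def B'_def less_Suc_eq)
  ultimately show ?case
    by blast
qed

lemma path_lipschitz_bound:
  fixes f c :: "nat \<Rightarrow> real"
  assumes "\<And>k. k < m \<Longrightarrow> \<bar>f k - f (Suc k)\<bar> \<le> c k" "j \<le> k" "k \<le> m"
  shows "\<bar>f k - f j\<bar> \<le> (\<Sum>i\<in>{j..<k}. c i)"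
  using assms(2,3)
proof (induction k rule: dec_induct)
  case (step k)
  then have "\<bar>f (Suc k) - f j\<bar> \<le> \<bar>f k - f j\<bar> + c k"
    using assms(1)[of k] by linarith
  then show ?case
    using step by simp
qed simp

lemma edge_conditions_min_caps:
  fixes x x' p p' q q' c :: real
  assumes "\<bar>x - x'\<bar> \<le> c" "c \<le> x + x'" "p' = p + c" "q = q' + c" "0 \<le> p" "0 \<le> q'"
    and "c \<le> p + q'" "c \<le> p + x'" "c \<le> x + q'"
  shows "\<bar>min x (min p q) - min x' (min p' q')\<bar> \<le> c \<and> c \<le> min x (min p q) + min x' (min p' q')"
  using assms by (auto simp: min_def abs_le_iff)

lemma shrunken_radii:
  fixes r c :: "nat \<Rightarrow> real"
  assumes r_nonneg: "\<And>k. k \<le> m \<Longrightarrow> 0 \<le> r k" and "0 \<le> c m"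
    and lip: "\<And>k. k < m \<Longrightarrow> \<bar>r k - r (Suc k)\<bar> \<le> c k"
    and tri: "\<And>k. k < m \<Longrightarrow> c k \<le> r k + r (Suc k)"
    and long: "\<And>k. k < m \<Longrightarrow> 2 * c k \<le> (\<Sum>i<m. c i) + c m"
    and closing: "c m \<le> r m + r 0"
    and minimal: "\<And>k. k < m \<Longrightarrow> r m + r 0 - c m \<le> r k + r (Suc k) - c k"
  shows "\<exists>R. (\<forall>k\<le>m. 0 \<le> R k \<and> R k \<le> r k)
    \<and> (\<forall>k<m. \<bar>R k - R (Suc k)\<bar> \<le> c k \<and> c k \<le> R k + R (Suc k)) \<and> R 0 + R m \<le> c m"
proof -
  define before where "before k = (\<Sum>i<k. c i)" for k
  define after where "after k = (\<Sum>i\<in>{k..<m}. c i)" for k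
  define s where "s = max 0 (c m - r m)"
  define R where "R k = min (r k) (min (s + before k) (c m - s + after k))" for k
  have s: "0 \<le> s" "s \<le> c m" "c m - r m \<le> s" "s \<le> r 0"
    using r_nonneg[of m] r_nonneg[of 0] \<open>0 \<le> c m\<close> closing by (auto simp: s_def)
  have c_nonneg: "0 \<le> c k" if "k < m" for k
    using lip[OF that] by linarith
  have before_nonneg: "0 \<le> before k" if "k \<le> m" for k
    using that c_nonneg by (auto simp: before_def intro: sum_nonneg)
  have after_nonneg: "0 \<le> after k" for k
    using c_nonneg by (auto simp: after_def intro: sum_nonneg)
  have before_after: "before k + after k = (\<Sum>i<m. c i)" if "k \<le> m" for k
    using that by (simp add: before_def after_def atLeast0LessThan[symmetric] sum.atLeastLessThan_concat)
  have r_before: "r k \<le> r 0 + before k" if "k \<le> m" for k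
    using path_lipschitz_bound[of m r c 0 k, OF lip] that by (simp add: before_def atLeast0LessThan)
  have r_after: "r k \<le> r m + after k" if "k \<le> m" for k
    using path_lipschitz_bound[of m r c k m, OF lip] that by (simp add: after_def abs_le_iff)
  have "\<bar>R k - R (Suc k)\<bar> \<le> c k \<and> c k \<le> R k + R (Suc k)" if k: "k < m" for k
    unfolding R_def
  proof (rule edge_conditions_min_caps)
    show "s + before (Suc k) = s + before k + c k" "c m - s + after k = c m - s + after (Suc k) + c k"
      using k by (simp_all add: before_def after_def sum.atLeast_Suc_lessThan)
    then show "c k \<le> s + before k + (c m - s + after (Suc k))"
      using long[OF k] before_after[of k] k by simp
    \<comment> \<open>the only use of the minimality of the closing edge\<close>
    show "c k \<le> s + before k + r (Suc k)" "c k \<le> r k + (c m - s + after (Suc k))"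
      using minimal[OF k] r_before[of k] r_after[of "Suc k"] s k by auto
  qed (use lip tri k s before_nonneg after_nonneg in auto)
  moreover have "0 \<le> R k \<and> R k \<le> r k" if "k \<le> m" for k
    using that r_nonneg before_nonneg after_nonneg s by (auto simp: R_def)
  moreover have "R 0 + R m \<le> c m"
    using s by (simp add: R_def before_def after_def)
  ultimately show ?thesis
    by blast
qed

lemma closed_path_two_coordinates:
  fixes r c :: "nat \<Rightarrow> real"
  assumes "\<And>k. k \<le> m \<Longrightarrow> 0 \<le> r k" "0 \<le> c m"
    and "\<And>k. k < m \<Longrightarrow> \<bar>r k - r (Suc k)\<bar> \<le> c k"
    and "\<And>k. k < m \<Longrightarrow> c k \<le> r k + r (Suc k)"
    and "\<And>k. k < m \<Longrightarrow> 2 * c k \<le> (\<Sum>i<m. c i) + c m"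
    and "c m \<le> r m + r 0"
    and "\<And>k. k < m \<Longrightarrow> r m + r 0 - c m \<le> r k + r (Suc k) - c k"
  shows "\<exists>A B. (\<forall>k\<le>m. max \<bar>A k\<bar> \<bar>B k\<bar> \<le> r k)
    \<and> (\<forall>k<m. max \<bar>A k - A (Suc k)\<bar> \<bar>B k - B (Suc k)\<bar> = c k)
    \<and> max \<bar>A m - A 0\<bar> \<bar>B m - B 0\<bar> \<le> c m"
proof -
  obtain R where R: "\<forall>k\<le>m. 0 \<le> R k \<and> R k \<le> r k"
      "\<forall>k<m. \<bar>R k - R (Suc k)\<bar> \<le> c k \<and> c k \<le> R k + R (Suc k)" "R 0 + R m \<le> c m"
    using shrunken_radii[OF assms] by blast
  obtain A B where AB: "\<forall>k\<le>m. max \<bar>A k\<bar> \<bar>B k\<bar> = R k"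
      "\<forall>k<m. max \<bar>A k - A (Suc k)\<bar> \<bar>B k - B (Suc k)\<bar> = c k"
    using path_two_coordinates[of m R c] R by auto
  have "max \<bar>A 0\<bar> \<bar>B 0\<bar> + max \<bar>A m\<bar> \<bar>B m\<bar> \<le> c m"
    using AB(1) R(3) by auto
  then have "max \<bar>A m - A 0\<bar> \<bar>B m - B 0\<bar> \<le> c m"
    by (smt (verit) abs_triangle_ineq4 max.cobounded1 max.cobounded2)
  then show ?thesis
    using AB R(1) by (intro exI[of _ A] exI[of _ B]) auto
qed

definition clamp :: "real \<Rightarrow> real \<Rightarrow> real" where
  "clamp a x = max (- a) (min a x)"

lemma abs_clamp_le: "0 \<le> a \<Longrightarrow> \<bar>clamp a x\<bar> \<le> a"
  by (auto simp: clamp_def)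

lemma clamp_eq: "\<bar>x\<bar> \<le> a \<Longrightarrow> clamp a x = x"
  by (auto simp: clamp_def)

lemma abs_clamp_diff_le:
  "\<bar>a - b\<bar> \<le> e \<Longrightarrow> \<bar>x - y\<bar> \<le> e \<Longrightarrow> \<bar>clamp a x - clamp b y\<bar> \<le> e"
  by (auto simp: clamp_def max_def min_def abs_le_iff)

lemma closing_coordinate:
  fixes r c :: "nat \<Rightarrow> real"
  assumes "\<And>k. k \<le> m \<Longrightarrow> 0 \<le> r k"
    and lip: "\<And>k. k < m \<Longrightarrow> \<bar>r k - r (Suc k)\<bar> \<le> c k"
    and closing: "\<bar>r m - r 0\<bar> \<le> c m" "c m \<le> r m + r 0" "c m \<le> (\<Sum>i<m. c i)"
  shows "\<exists>C. (\<forall>k\<le>m. \<bar>C k\<bar> \<le> r k) \<and> (\<forall>k<m. \<bar>C k - C (Suc k)\<bar> \<le> c k) \<and> \<bar>C m - C 0\<bar> = c m"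
proof -
  define C where "C k = clamp (r k) (r 0 - min (\<Sum>i<k. c i) (c m))" for k
  have "\<bar>C k - C (Suc k)\<bar> \<le> c k" if "k < m" for k
  proof -
    have "0 \<le> c k"
      using lip[OF that] by linarith
    then have "\<bar>(r 0 - min (\<Sum>i<k. c i) (c m)) - (r 0 - min (\<Sum>i<Suc k. c i) (c m))\<bar> \<le> c k"
      by (auto simp: min_def abs_le_iff)
    then show ?thesis
      unfolding C_def using lip[OF that] by (rule abs_clamp_diff_le[rotated])
  qed
  moreover have "C 0 = r 0" "C m = r 0 - c m"
    using assms(1)[of 0] closing by (auto simp: C_def clamp_eq abs_le_iff)
  ultimately show ?thesis
    using assms(1) closing(1) by (intro exI[of _ C]) (auto simp: C_def abs_clamp_le)
qed

section \<open>Sup-norm embedding of the wheel\<close>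

lemma linf_dist_0 [simp]: "linf_dist 0 x y = 0"
  by (simp add: linf_dist_def)

lemma linf_dist_Suc: "linf_dist (Suc k) x y = max (linf_dist k x y) \<bar>x k - y k\<bar>"
proof -
  have eq: "{\<bar>x i - y i\<bar> | i. i < Suc k} = insert \<bar>x k - y k\<bar> {\<bar>x i - y i\<bar> | i. i < k}"
    by (auto simp: less_Suc_eq)
  have "finite {\<bar>x i - y i\<bar> | i. i < k}"
    by simp
  then show ?thesis
    unfolding linf_dist_def eq insert_commute[of 0] by (simp add: max.commute)
qed

lemma linf_dist_cong:
  assumes "\<And>i. i < k \<Longrightarrow> x i = x' i" "\<And>i. i < k \<Longrightarrow> y i = y' i"
  shows "linf_dist k x y = linf_dist k x' y'"
  using assms by (induction k) (auto simp: linf_dist_Suc)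

lemma linf_dist_fun_upd:
  "linf_dist (Suc k) (x(k := a)) (y(k := b)) = max (linf_dist k x y) \<bar>a - b\<bar>"
proof -
  have "linf_dist k (x(k := a)) (y(k := b)) = linf_dist k x y"
    by (rule linf_dist_cong) simp_all
  then show ?thesis
    by (simp add: linf_dist_Suc)
qed

lemma linf_dist_commute: "linf_dist k x y = linf_dist k y x"
  by (simp add: linf_dist_def abs_minus_commute)

lemma linf_dist_3:
  "linf_dist 3 x y = max (max \<bar>x 0 - y 0\<bar> \<bar>x 1 - y 1\<bar>) \<bar>x 2 - y 2\<bar>"
  by (simp add: numeral_3_eq_3 numeral_2_eq_2 linf_dist_Suc)

(* With the hub at the origin; the spoke lengths are added later as one more coordinate. *)
definition rim_embedding ::
    "nat \<Rightarrow> nat \<Rightarrow> (nat \<Rightarrow> real) \<Rightarrow> (nat \<Rightarrow> real) \<Rightarrow> (nat \<Rightarrow> nat \<Rightarrow> real) \<Rightarrow> bool" where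
  "rim_embedding k n r c X \<longleftrightarrow> (\<forall>i<n. linf_dist k (X i) (\<lambda>_. 0) \<le> r i
     \<and> linf_dist k (X i) (X (Suc i mod n)) = c i)"

lemma rim_embedding_rotate:
  assumes "a < n" and X: "rim_embedding k n (\<lambda>u. r ((a + u) mod n)) (\<lambda>u. c ((a + u) mod n)) X"
  shows "rim_embedding k n r c (\<lambda>v. X ((n - a + v) mod n))"
  unfolding rim_embedding_def
proof (intro allI impI)
  fix v assume "v < n"
  define u where "u = (n - a + v) mod n"
  have "u < n"
    using \<open>v < n\<close> by (simp add: u_def)
  have "(a + u) mod n = (n + v) mod n"
    using \<open>a < n\<close> by (simp add: u_def mod_add_right_eq)
  then have "(a + u) mod n = v"
    using \<open>v < n\<close> by simp
  moreover have "(n - a + Suc v mod n) mod n = Suc u mod n"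
    by (simp add: u_def Suc_mod_add)
  ultimately show "linf_dist k (X u) (\<lambda>_. 0) \<le> r v
      \<and> linf_dist k (X u) (X ((n - a + Suc v mod n) mod n)) = c v"
    using X \<open>u < n\<close> unfolding rim_embedding_def by auto
qed

lemma rim_embedding_minimal_closing_edge:
  fixes r c :: "nat \<Rightarrow> real"
  assumes W: "wheel_conditions (Suc m) r c"
    and minimal: "\<And>k. k < m \<Longrightarrow> r m + r 0 - c m \<le> r k + r (Suc k) - c k"
  shows "\<exists>X. rim_embedding 3 (Suc m) r c X"
proof -
  have path: "0 \<le> r k" "\<bar>r k - r (Suc k)\<bar> \<le> c k" "c k \<le> r k + r (Suc k)"
      "2 * c k \<le> (\<Sum>i<m. c i) + c m" if "k < m" for k
    using W that unfolding wheel_conditions_def by (auto dest!: spec[of _ k])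
  have closing: "0 \<le> r m" "\<bar>r m - r 0\<bar> \<le> c m" "c m \<le> r m + r 0" "c m \<le> (\<Sum>i<m. c i)"
    using W unfolding wheel_conditions_def by (auto dest!: spec[of _ m])
  have r_nonneg: "0 \<le> r k" if "k \<le> m" for k
    using that path(1) closing(1) by (cases "k = m") auto
  obtain A B where AB: "\<forall>k\<le>m. max \<bar>A k\<bar> \<bar>B k\<bar> \<le> r k"
      "\<forall>k<m. max \<bar>A k - A (Suc k)\<bar> \<bar>B k - B (Suc k)\<bar> = c k" "max \<bar>A m - A 0\<bar> \<bar>B m - B 0\<bar> \<le> c m"
    using closed_path_two_coordinates[of m r c] r_nonneg path minimal closing by force
  obtain C where C: "\<forall>k\<le>m. \<bar>C k\<bar> \<le> r k" "\<forall>k<m. \<bar>C k - C (Suc k)\<bar> \<le> c k" "\<bar>C m - C 0\<bar> = c m"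
    using closing_coordinate[of m r c] r_nonneg path closing by auto
  define X where "X k = (\<lambda>j::nat. if j = 0 then A k else if j = 1 then B k else C k)" for k
  have "linf_dist 3 (X k) (\<lambda>_. 0) \<le> r k" if "k \<le> m" for k
    using that AB(1) C(1) by (simp add: linf_dist_3 X_def)
  moreover have "linf_dist 3 (X k) (X (Suc k)) = c k" if "k < m" for k
    using that AB(2) C(2) by (fastforce simp: linf_dist_3 X_def)
  moreover have "linf_dist 3 (X m) (X 0) = c m"
    using AB(3) C(3) by (simp add: linf_dist_3 X_def)
  moreover have "Suc k mod Suc m = Suc k" if "k < m" for k
    using that by simp
  ultimately have "rim_embedding 3 (Suc m) r c X"
    unfolding rim_embedding_def by (auto simp: less_Suc_eq)
  then show ?thesis
    by blast
qed

lemma rim_embedding_exists: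
  assumes "0 < n" "wheel_conditions n r c"
  shows "\<exists>X. rim_embedding 3 n r c X"
proof -
  obtain m where n: "n = Suc m"
    using assms(1) by (cases n) auto
  define slack where "slack i = r i + r (Suc i mod n) - c i" for i
  have "Min (slack ` {..<n}) \<in> slack ` {..<n}"
    using assms(1) by (intro Min_in) auto
  then obtain e where e: "e < n" "slack e = Min (slack ` {..<n})"
    by auto
  define a where "a = Suc e mod n"
  define r' where "r' u = r ((a + u) mod n)" for u
  define c' where "c' u = c ((a + u) mod n)" for u
  have "r' m + r' 0 - c' m \<le> r' k + r' (Suc k) - c' k" if "k < m" for k
  proof -
    have "(a + m) mod n = e"
      using e(1) Suc_add_mod_Suc[of e m] by (simp add: a_def n mod_add_left_eq)
    then have "r' m + r' 0 - c' m = slack e"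
      by (simp add: r'_def c'_def slack_def a_def)
    also have "\<dots> \<le> slack ((a + k) mod n)"
      using e assms(1) by simp
    also have "\<dots> = r' k + r' (Suc k) - c' k"
      using Suc_mod_add[of a k n] that by (simp add: r'_def c'_def slack_def n)
    finally show ?thesis .
  qed
  then obtain X where "rim_embedding 3 n r' c' X"
    using rim_embedding_minimal_closing_edge[of m r' c'] wheel_conditions_rotate[OF assms(2)]
    unfolding r'_def c'_def n by auto
  then have "rim_embedding 3 n r c (\<lambda>v. X ((n - a + v) mod n))"
    using assms(1) by (intro rim_embedding_rotate) (simp_all add: a_def r'_def[abs_def] c'_def[abs_def])
  then show ?thesis
    by blast
qed

lemma wheel_embedding_of_rim_embedding:
  assumes X: "rim_embedding 3 n r c X" and W: "wheel_conditions n r c"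
  shows "\<exists>\<phi>. \<forall>i<n. linf_dist 4 (\<phi> i) (\<phi> n) = r i \<and> linf_dist 4 (\<phi> i) (\<phi> (Suc i mod n)) = c i"
proof -
  define Y where "Y v = (if v < n then X v else (\<lambda>_. 0))" for v
  define \<rho> where "\<rho> v = (if v < n then r v else 0)" for v
  define \<phi> where "\<phi> v = (Y v)(3 := \<rho> v)" for v
  have dist: "linf_dist 4 (\<phi> v) (\<phi> w) = max (linf_dist 3 (Y v) (Y w)) \<bar>\<rho> v - \<rho> w\<bar>" for v w
    unfolding \<phi>_def using linf_dist_fun_upd[of 3] by simp
  have "Y i = X i" "\<rho> i = r i" "Y (Suc i mod n) = X (Suc i mod n)" "\<rho> (Suc i mod n) = r (Suc i mod n)"
    if "i < n" for i
    using that by (simp_all add: Y_def \<rho>_def)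
  moreover have "Y n = (\<lambda>_. 0)" "\<rho> n = 0"
    by (simp_all add: Y_def \<rho>_def)
  moreover have "linf_dist 3 (X i) (\<lambda>_. 0) \<le> r i" "0 \<le> r i"
    "linf_dist 3 (X i) (X (Suc i mod n)) = c i" "\<bar>r i - r (Suc i mod n)\<bar> \<le> c i" if "i < n" for i
    using X W that by (auto simp: rim_embedding_def wheel_conditions_def)
  ultimately show ?thesis
    by (intro exI[of _ \<phi>]) (simp add: dist)
qed

lemma wheel_linf_realizable:
  assumes "2 \<le> n"
  shows "linf_realizable (wheel_V n) (wheel_E n) 4"
  unfolding linf_realizable_def
proof (intro allI impI)
  fix d assume d: "distance_function (wheel_V n) (wheel_E n) d"
  define r where "r i = d {i, n}" for i
  define c where "c i = d {i, Suc i mod n}" for i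
  have W: "wheel_conditions n r c"
    unfolding r_def c_def using wheel_conditions_of_distance_function[OF assms d] .
  then obtain X where "rim_embedding 3 n r c X"
    using rim_embedding_exists[of n r c] assms by auto
  then obtain \<phi> where \<phi>: "\<And>i. i < n \<Longrightarrow> linf_dist 4 (\<phi> i) (\<phi> n) = d {i, n}"
      "\<And>i. i < n \<Longrightarrow> linf_dist 4 (\<phi> i) (\<phi> (Suc i mod n)) = d {i, Suc i mod n}"
    using wheel_embedding_of_rim_embedding W unfolding r_def c_def by blast
  have "linf_dist 4 (\<phi> v) (\<phi> w) = d {v, w}" if E: "{v, w} \<in> wheel_E n" for v w
  proof -
    have either_way: "linf_dist 4 (\<phi> v) (\<phi> w) = d {v, w}"
      if "linf_dist 4 (\<phi> a) (\<phi> b) = d {a, b}" "(v, w) = (a, b) \<or> (v, w) = (b, a)" for a b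
      using that linf_dist_commute by (auto simp: insert_commute)
    from E consider (rim) i where "i < n" "{v, w} = {i, Suc i mod n}"
      | (spoke) i where "i < n" "{v, w} = {i, n}"
      unfolding wheel_E_def by auto
    then show ?thesis
    proof cases
      case rim
      then show ?thesis
        by (intro either_way[OF \<phi>(2)]) (auto simp: doubleton_eq_iff)
    next
      case spoke
      then show ?thesis
        by (intro either_way[OF \<phi>(1)]) (auto simp: doubleton_eq_iff)
    qed
  qed
  then show "\<exists>\<phi>. \<forall>v w. {v, w} \<in> wheel_E n \<longrightarrow> linf_dist 4 (\<phi> v) (\<phi> w) = d {v, w}"
    by blast
qed

theorem mainTheorem12:
  fixes n :: nat
  assumes "n \<ge> 3"
  shows "f_infty (wheel_V n) (wheel_E n) \<le> 4"
  unfolding f_infty_def using assms by (intro Least_le wheel_linf_realizable) simp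

end
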